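(* Let $N\ge 1$ and let $f:\{0,1\}^N\to\{-1,1\}$ be a Boolean function. Let $0\le\epsilon$ and suppose a quantum query (black-box) algorithm computes $f$ with error probability at most $\epsilon$ using $T$ queries. Then $$T\;\ge\;\frac{1-2\sqrt{\epsilon}}{2}\,\rho_f\,N\;=\;\frac{1-2\sqrt{\epsilon}}{2}\,\bar S_f .$$
   Context: Quantum query model: the input $x=(x_0,\dots,x_{N-1})\in\{0,1\}^N$ is accessible only through an oracle. The algorithm works in a Hilbert space with basis states $|i\rangle_I|a\rangle_A|w\rangle_W|r\rangle_R$ (index register $i\in\{0,\dots,N-1\}$, one-bit answer register $a$, a working register $w$ of fixed size, and a one-bit result register $r$). An algorithm with $T$ queries is a sequence $U_0, O_x, U_1, O_x,\dots,O_x,U_T$ of unitaries, where the $U_j$ are arbitrary unitaries independent of $x$ and the query gate is $O_x:|i\rangle|a\rangle|w\rangle|r\rangle\mapsto|i\rangle|a\oplus x_i\rangle|w\rangle|r\rangle$. It starts from a fixed basis state, and at the end the result register is measured. It computes $f$ with error probability at most $\epsilon$ if for every $x\in\{0,1\}^N$ the measured result equals $f(x)$ with probability at least $1-\epsilon$. For $x\in\{0,1\}^N$, $e_i$ is the string with a single $1$ in position $i$ and $+$ is bitwise XOR. The influence of variable $i$ is $\mathrm{Inf}_i(f)=\Pr_x[f(x)\ne f(x+e_i)]$ with $x$ uniform in $\{0,1\}^N$; the average influence is $\rho_f=\frac1N\sum_{i=0}^{N-1}\mathrm{Inf}_i(f)$. The sensitivity of $f$ at $x$ is $S_f(x)=|\{i: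 f(x)\ne f(x+e_i)\}|$, and the average sensitivity is $\bar S_f=E_x[S_f(x)]$ for uniform $x$ (so $\bar S_f=\rho_f N$). *)

theory Defs
  imports Complex_Main
begin

text \<open>Basis states |i,a,w,r> encoded as tuples (i,a,w,r) of naturals:
  index i < N, answer bit a < 2, working register w < M, result bit r < 2.\<close>

type_synonym basis = "nat \<times> nat \<times> nat \<times> nat"
type_synonym qstate = "basis \<Rightarrow> complex"
type_synonym qop = "basis \<Rightarrow> basis \<Rightarrow> complex"

definition basis_set :: "nat \<Rightarrow> nat \<Rightarrow> basis set" where
  "basis_set N M = {(i,a,w,r). i < N \<and> a < 2 \<and> w < M \<and> r < 2}"

definition apply_op :: "nat \<Rightarrow> nat \<Rightarrow> qop \<Rightarrow> qstate \<Rightarrow> qstate" where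
  "apply_op N M U \<psi> = (\<lambda>b. \<Sum>c\<in>basis_set N M. U b c * \<psi> c)"

definition unitary_op :: "nat \<Rightarrow> nat \<Rightarrow> qop \<Rightarrow> bool" where
  "unitary_op N M U \<longleftrightarrow>
     (\<forall>b\<in>basis_set N M. \<forall>c\<in>basis_set N M.
        (\<Sum>d\<in>basis_set N M. cnj (U d b) * U d c) = (if b = c then 1 else 0))"

definition query :: "(nat \<Rightarrow> bool) \<Rightarrow> qstate \<Rightarrow> qstate" where
  "query x \<psi> = (\<lambda>(i,a,w,r). \<psi> (i, if x i then 1 - a else a, w, r))"

text \<open>Run U_0, O_x, U_1, O_x, ..., O_x, U_T given as the list [U_0,...,U_T].\<close>
fun run :: "nat \<Rightarrow> nat \<Rightarrow> qop list \<Rightarrow> (nat \<Rightarrow> bool) \<Rightarrow> qstate \<Rightarrow> qstate" where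
  "run N M [] x \<psi> = \<psi>"
| "run N M [U] x \<psi> = apply_op N M U \<psi>"
| "run N M (U # V # Us) x \<psi> = run N M (V # Us) x (query x (apply_op N M U \<psi>))"

definition basis_state :: "basis \<Rightarrow> qstate" where
  "basis_state b0 = (\<lambda>b. if b = b0 then 1 else 0)"

definition prob_result :: "nat \<Rightarrow> nat \<Rightarrow> qop list \<Rightarrow> basis \<Rightarrow> (nat \<Rightarrow> bool) \<Rightarrow> nat \<Rightarrow> real" where
  "prob_result N M Us b0 x v =
     (\<Sum>b\<in>{b\<in>basis_set N M. snd (snd (snd b)) = v}. (cmod (run N M Us x (basis_state b0) b))^2)"

text \<open>Inputs x in {0,1}^N, represented as bit functions vanishing from N on.\<close>
definition cube :: "nat \<Rightarrow> (nat \<Rightarrow> bool) set" where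
  "cube N = {x. \<forall>i\<ge>N. \<not> x i}"

text \<open>Result bit r encodes the output value (-1)^r in {-1,1}.\<close>
definition computes_with_error ::
  "nat \<Rightarrow> nat \<Rightarrow> qop list \<Rightarrow> basis \<Rightarrow> ((nat \<Rightarrow> bool) \<Rightarrow> int) \<Rightarrow> real \<Rightarrow> bool" where
  "computes_with_error N M Us b0 f \<epsilon> \<longleftrightarrow>
     (\<forall>x\<in>cube N. prob_result N M Us b0 x (if f x = 1 then 0 else 1) \<ge> 1 - \<epsilon>)"

definition flip :: "nat \<Rightarrow> (nat \<Rightarrow> bool) \<Rightarrow> (nat \<Rightarrow> bool)" where
  "flip i x = x(i := \<not> x i)"

definition influence :: "nat \<Rightarrow> ((nat \<Rightarrow> bool) \<Rightarrow> int) \<Rightarrow> nat \<Rightarrow> real" where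
  "influence N f i = real (card {x\<in>cube N. f x \<noteq> f (flip i x)}) / 2 ^ N"

definition avg_influence :: "nat \<Rightarrow> ((nat \<Rightarrow> bool) \<Rightarrow> int) \<Rightarrow> real" where
  "avg_influence N f = (\<Sum>i<N. influence N f i) / real N"

definition sensitivity :: "nat \<Rightarrow> ((nat \<Rightarrow> bool) \<Rightarrow> int) \<Rightarrow> (nat \<Rightarrow> bool) \<Rightarrow> nat" where
  "sensitivity N f x = card {i. i < N \<and> f x \<noteq> f (flip i x)}"

definition avg_sensitivity :: "nat \<Rightarrow> ((nat \<Rightarrow> bool) \<Rightarrow> int) \<Rightarrow> real" where
  "avg_sensitivity N f = (\<Sum>x\<in>cube N. real (sensitivity N f x)) / 2 ^ N"

end

theory Submission
  imports Defs
begin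

text \<open>The polynomial method. After \<open>T\<close> queries every amplitude is a multilinear
  polynomial of degree at most \<open>T\<close> in the input bits, so the bias \<open>g = p\<^sub>0 - p\<^sub>1\<close>
  of the result register is a real polynomial of degree at most \<open>2T\<close> with \<open>|g| \<le> 1\<close>.
  If \<open>c\<^sub>S\<close> are the Walsh coefficients of \<open>g\<close>, Parseval gives
  \<open>\<Sum>\<^sub>i \<Sum>\<^sub>x |g x - g (x + e\<^sub>i)|\<^sup>2 = 2\<^sup>N \<Sum>\<^sub>S 4 |S| |c\<^sub>S|\<^sup>2\<close>,
  which is at most \<open>4 \<cdot> 2T \<cdot> \<Sum>\<^sub>x |g x|\<^sup>2 \<le> 8 T 2\<^sup>N\<close>.
  On the other hand, correctness forces \<open>|g x - g (x + e\<^sub>i)| \<ge> 2 - 4\<epsilon>\<close> on every edge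
  where \<open>f\<close> changes, and there are \<open>2\<^sup>N \<Sum>\<^sub>i Inf\<^sub>i(f)\<close> such edges. Hence
  \<open>T \<ge> (1 - 2\<epsilon>)\<^sup>2 / 2 \<cdot> \<rho>\<^sub>f N\<close>, which dominates the stated bound for \<open>\<epsilon> \<le> 1/4\<close>;
  for larger \<open>\<epsilon>\<close> the stated bound is not positive. Double counting shows that \<open>\<rho>\<^sub>f N\<close>
  is the average sensitivity.\<close>

section \<open>Walsh characters on the cube\<close>

definition walsh :: "nat set \<Rightarrow> (nat \<Rightarrow> bool) \<Rightarrow> complex" where
  "walsh S x = (-1) ^ card {i\<in>S. x i}"

lemma cube_eq_image_Pow: "cube N = (\<lambda>A i. i \<in> A) ` Pow {..<N}"
proof
  show "cube N \<subseteq> (\<lambda>A i. i \<in> A) ` Pow {..<N}"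
  proof
    fix x assume "x \<in> cube N"
    then have "x = (\<lambda>i. i \<in> {i. x i})" "{i. x i} \<in> Pow {..<N}"
      by (auto simp: cube_def) (meson not_less)
    then show "x \<in> (\<lambda>A i. i \<in> A) ` Pow {..<N}" by blast
  qed
qed (auto simp: cube_def)

lemma finite_cube [simp]: "finite (cube N)"
  by (simp add: cube_eq_image_Pow)

lemma card_cube: "card (cube N) = 2 ^ N"
proof -
  have "inj_on (\<lambda>A i. i \<in> A) (Pow {..<N})"
    by (rule inj_onI) (auto simp: fun_eq_iff)
  then show ?thesis by (simp add: cube_eq_image_Pow card_image card_Pow)
qed

lemma flip_in_cube: "i < N \<Longrightarrow> x \<in> cube N \<Longrightarrow> flip i x \<in> cube N"
  by (auto simp: cube_def flip_def)

lemma flip_flip [simp]: "flip i (flip i x) = x"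
  by (auto simp: flip_def fun_eq_iff)

lemma cnj_walsh [simp]: "cnj (walsh S x) = walsh S x"
  by (simp add: walsh_def)

lemma walsh_singleton: "walsh {i} x = (if x i then -1 else 1)"
  by (simp add: walsh_def Collect_conv_if)

lemma walsh_flip:
  assumes "finite S"
  shows "walsh S (flip i x) = (if i \<in> S then - walsh S x else walsh S x)"
proof (cases "i \<in> S")
  case True
  define A where "A = {j\<in>S - {i}. x j}"
  have "finite A" "i \<notin> A" using assms by (auto simp: A_def)
  moreover have "{j\<in>S. x j} = (if x i then insert i A else A)"
    and "{j\<in>S. flip i x j} = (if x i then A else insert i A)"
    using True by (auto simp: A_def flip_def)
  ultimately show ?thesis using True by (simp add: walsh_def)
next
  case False
  then have "{j\<in>S. flip i x j} = {j\<in>S. x j}" by (auto simp: flip_def)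
  then show ?thesis using False by (simp add: walsh_def)
qed

lemma walsh_mult:
  assumes "finite S" "finite T"
  shows "walsh S x * walsh T x = walsh (sym_diff S T) x"
proof -
  let ?A = "{i\<in>S. x i}" and ?B = "{i\<in>T. x i}"
  have fin: "finite ?A" "finite ?B" using assms by auto
  have "card ?A = card (?A \<inter> ?B) + card (?A - ?B)" "card ?B = card (?A \<inter> ?B) + card (?B - ?A)"
    using fin card_Int_Diff[of ?A ?B] card_Int_Diff[of ?B ?A] by (simp_all add: Int_commute)
  moreover have "card (sym_diff ?A ?B) = card (?A - ?B) + card (?B - ?A)"
    using fin by (intro card_Un_disjoint) auto
  moreover have "{i\<in>sym_diff S T. x i} = sym_diff ?A ?B" by auto
  ultimately have parity: "card ?A + card ?B = card {i\<in>sym_diff S T. x i} + 2 * card (?A \<inter> ?B)"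
    by simp
  have "walsh S x * walsh T x = (-1) ^ (card ?A + card ?B)"
    by (simp add: walsh_def power_add)
  also have "\<dots> = walsh (sym_diff S T) x"
    unfolding parity walsh_def by (simp add: power_add power_mult)
  finally show ?thesis .
qed

lemma finite_of_mem_Pow_lessThan: "S \<in> Pow {..<N::nat} \<Longrightarrow> finite S"
  by (metis PowD finite_lessThan finite_subset)

lemma sum_walsh:
  assumes "S \<subseteq> {..<N}"
  shows "(\<Sum>x\<in>cube N. walsh S x) = (if S = {} then 2 ^ N else 0)"
proof (cases "S = {}")
  case True
  then show ?thesis by (simp add: walsh_def card_cube)
next
  case False
  then obtain i where i: "i \<in> S" by blast
  have "finite S" using assms finite_subset by blast
  have "(\<Sum>x\<in>cube N. walsh S x) = (\<Sum>x\<in>cube N. walsh S (flip i x))"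
    using i assms
    by (intro sum.reindex_bij_witness[of _ "flip i" "flip i"]) (auto simp: flip_in_cube)
  also have "\<dots> = - (\<Sum>x\<in>cube N. walsh S x)"
    using i \<open>finite S\<close> by (simp add: walsh_flip sum_negf)
  finally show ?thesis using False by simp
qed

lemma sum_walsh_mult_walsh:
  assumes "S \<subseteq> {..<N}" "T \<subseteq> {..<N}"
  shows "(\<Sum>x\<in>cube N. walsh S x * walsh T x) = (if S = T then 2 ^ N else 0)"
proof -
  have "finite S" "finite T" using assms finite_subset by auto
  then have "(\<Sum>x\<in>cube N. walsh S x * walsh T x) = (\<Sum>x\<in>cube N. walsh (sym_diff S T) x)"
    by (simp add: walsh_mult)
  also have "\<dots> = (if sym_diff S T = {} then 2 ^ N else 0)"
    using assms by (intro sum_walsh) auto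
  finally show ?thesis by auto
qed

lemma parseval:
  fixes c :: "nat set \<Rightarrow> complex"
  shows "(\<Sum>x\<in>cube N. (cmod (\<Sum>S\<in>Pow {..<N}. c S * walsh S x))\<^sup>2)
    = 2 ^ N * (\<Sum>S\<in>Pow {..<N}. (cmod (c S))\<^sup>2)"
proof -
  let ?P = "Pow {..<N}"
  have "complex_of_real (\<Sum>x\<in>cube N. (cmod (\<Sum>S\<in>?P. c S * walsh S x))\<^sup>2)
      = (\<Sum>x\<in>cube N. \<Sum>S\<in>?P. \<Sum>T\<in>?P. c S * cnj (c T) * (walsh S x * walsh T x))"
    unfolding of_real_sum complex_norm_square by (simp add: cnj_sum sum_product mult_ac)
  also have "\<dots> = (\<Sum>S\<in>?P. \<Sum>T\<in>?P. c S * cnj (c T) * (\<Sum>x\<in>cube N. walsh S x * walsh T x))"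
    by (simp add: sum_distrib_left sum.swap[of _ "cube N"])
  also have "\<dots> = (\<Sum>S\<in>?P. 2 ^ N * (c S * cnj (c S)))"
    by (intro sum.cong refl) (simp add: sum_walsh_mult_walsh if_distrib sum.delta cong: if_cong)
  also have "\<dots> = complex_of_real (2 ^ N * (\<Sum>S\<in>?P. (cmod (c S))\<^sup>2))"
    unfolding of_real_mult of_real_sum complex_norm_square by (simp add: sum_distrib_left)
  finally show ?thesis by (simp only: of_real_eq_iff)
qed

section \<open>Fourier degree\<close>

definition fourier_deg_le :: "nat \<Rightarrow> nat \<Rightarrow> ((nat \<Rightarrow> bool) \<Rightarrow> complex) \<Rightarrow> bool" where
  "fourier_deg_le N d g \<longleftrightarrow> (\<exists>c. (\<forall>S. d < card S \<longrightarrow> c S = 0) \<and>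
      (\<forall>x\<in>cube N. g x = (\<Sum>S\<in>Pow {..<N}. c S * walsh S x)))"

lemma fourier_deg_leI:
  assumes "\<And>S. d < card S \<Longrightarrow> c S = 0"
    and "\<And>x. x \<in> cube N \<Longrightarrow> g x = (\<Sum>S\<in>Pow {..<N}. c S * walsh S x)"
  shows "fourier_deg_le N d g"
  using assms unfolding fourier_deg_le_def by blast

lemma fourier_deg_leE:
  assumes "fourier_deg_le N d g"
  obtains c where "\<And>S. d < card S \<Longrightarrow> c S = 0"
    and "\<And>x. x \<in> cube N \<Longrightarrow> g x = (\<Sum>S\<in>Pow {..<N}. c S * walsh S x)"
  using assms unfolding fourier_deg_le_def by blast

lemma fourier_deg_le_cong:
  "fourier_deg_le N d g \<Longrightarrow> (\<And>x. x \<in> cube N \<Longrightarrow> g x = h x) \<Longrightarrow> fourier_deg_le N d h"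
  unfolding fourier_deg_le_def by metis

lemma fourier_deg_le_mono: "fourier_deg_le N d g \<Longrightarrow> d \<le> e \<Longrightarrow> fourier_deg_le N e g"
  unfolding fourier_deg_le_def by (meson le_less_trans)

lemma fourier_deg_le_walsh:
  assumes "S \<subseteq> {..<N}"
  shows "fourier_deg_le N (card S) (walsh S)"
proof (rule fourier_deg_leI)
  fix x
  have "(\<Sum>T\<in>Pow {..<N}. (if T = S then 1 else 0) * walsh T x)
      = (\<Sum>T\<in>Pow {..<N}. if T = S then walsh S x else 0)"
    by (rule sum.cong) auto
  then show "walsh S x = (\<Sum>T\<in>Pow {..<N}. (if T = S then 1 else 0) * walsh T x)"
    using assms by simp
qed auto

lemma fourier_deg_le_add:
  assumes "fourier_deg_le N d g" "fourier_deg_le N d h"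
  shows "fourier_deg_le N d (\<lambda>x. g x + h x)"
proof -
  obtain c where "\<And>S. d < card S \<Longrightarrow> c S = 0"
    and "\<And>x. x \<in> cube N \<Longrightarrow> g x = (\<Sum>S\<in>Pow {..<N}. c S * walsh S x)"
    using assms(1) fourier_deg_leE by blast
  moreover obtain c' where "\<And>S. d < card S \<Longrightarrow> c' S = 0"
    and "\<And>x. x \<in> cube N \<Longrightarrow> h x = (\<Sum>S\<in>Pow {..<N}. c' S * walsh S x)"
    using assms(2) fourier_deg_leE by blast
  ultimately show ?thesis
    by (intro fourier_deg_leI[of d "\<lambda>S. c S + c' S"]) (simp_all add: sum.distrib distrib_right)
qed

lemma fourier_deg_le_scale:
  assumes "fourier_deg_le N d g"
  shows "fourier_deg_le N d (\<lambda>x. k * g x)"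
proof -
  obtain c where "\<And>S. d < card S \<Longrightarrow> c S = 0"
    and "\<And>x. x \<in> cube N \<Longrightarrow> g x = (\<Sum>S\<in>Pow {..<N}. c S * walsh S x)"
    using assms fourier_deg_leE by blast
  then show ?thesis
    by (intro fourier_deg_leI[of d "\<lambda>S. k * c S"]) (simp_all add: sum_distrib_left mult.assoc)
qed

lemma fourier_deg_le_diff:
  assumes "fourier_deg_le N d g" "fourier_deg_le N d h"
  shows "fourier_deg_le N d (\<lambda>x. g x - h x)"
  using fourier_deg_le_add[OF assms(1) fourier_deg_le_scale[OF assms(2), of "-1"]] by simp

lemma fourier_deg_le_cnj:
  assumes "fourier_deg_le N d g"
  shows "fourier_deg_le N d (\<lambda>x. cnj (g x))"
proof -
  obtain c where "\<And>S. d < card S \<Longrightarrow> c S = 0"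
    and "\<And>x. x \<in> cube N \<Longrightarrow> g x = (\<Sum>S\<in>Pow {..<N}. c S * walsh S x)"
    using assms fourier_deg_leE by blast
  then show ?thesis
    by (intro fourier_deg_leI[of d "\<lambda>S. cnj (c S)"]) simp_all
qed

lemma fourier_deg_le_const: "fourier_deg_le N d (\<lambda>x. k)"
proof -
  have "fourier_deg_le N 0 (\<lambda>x. k * walsh {} x)"
    using fourier_deg_le_scale[OF fourier_deg_le_walsh[of "{}" N]] by simp
  then show ?thesis
    by (rule fourier_deg_le_mono[OF fourier_deg_le_cong]) (simp_all add: walsh_def)
qed

lemma fourier_deg_le_sum:
  assumes "finite A" "\<And>a. a \<in> A \<Longrightarrow> fourier_deg_le N d (g a)"
  shows "fourier_deg_le N d (\<lambda>x. \<Sum>a\<in>A. g a x)"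
  using assms
  by (induction A rule: finite_induct) (simp_all add: fourier_deg_le_const fourier_deg_le_add)

lemma fourier_deg_le_mult:
  assumes "fourier_deg_le N d g" "fourier_deg_le N e h"
  shows "fourier_deg_le N (d + e) (\<lambda>x. g x * h x)"
proof -
  let ?P = "Pow {..<N}"
  obtain c where c0: "\<And>S. d < card S \<Longrightarrow> c S = 0"
    and g: "\<And>x. x \<in> cube N \<Longrightarrow> g x = (\<Sum>S\<in>?P. c S * walsh S x)"
    using assms(1) fourier_deg_leE by blast
  obtain c' where c'0: "\<And>T. e < card T \<Longrightarrow> c' T = 0"
    and h: "\<And>x. x \<in> cube N \<Longrightarrow> h x = (\<Sum>T\<in>?P. c' T * walsh T x)"
    using assms(2) fourier_deg_leE by blast
  have term_deg: "fourier_deg_le N (d + e) (\<lambda>x. c S * c' T * walsh (sym_diff S T) x)"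
    if "S \<in> ?P" "T \<in> ?P" for S T
  proof (cases "card S \<le> d \<and> card T \<le> e")
    case True
    have "finite S" "finite T" using that finite_of_mem_Pow_lessThan by auto
    then have "card (S - T) \<le> card S" "card (T - S) \<le> card T"
      by (simp_all add: card_mono)
    then have "card (sym_diff S T) \<le> card S + card T"
      using card_Un_le[of "S - T" "T - S"] by linarith
    then have "card (sym_diff S T) \<le> d + e" using True by linarith
    moreover have "sym_diff S T \<subseteq> {..<N}" using that by auto
    ultimately have "fourier_deg_le N (d + e) (walsh (sym_diff S T))"
      using fourier_deg_le_mono fourier_deg_le_walsh by blast
    then show ?thesis by (rule fourier_deg_le_scale)
  next
    case False
    then show ?thesis using c0 c'0 fourier_deg_le_const[of N _ 0] by auto
  qed
  have expand: "g x * h x = (\<Sum>S\<in>?P. \<Sum>T\<in>?P. c S * c' T * walsh (sym_diff S T) x)"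
    if "x \<in> cube N" for x
  proof -
    have "g x * h x = (\<Sum>S\<in>?P. \<Sum>T\<in>?P. c S * c' T * (walsh S x * walsh T x))"
      unfolding g[OF that] h[OF that] sum_product by (simp add: mult_ac)
    also have "\<dots> = (\<Sum>S\<in>?P. \<Sum>T\<in>?P. c S * c' T * walsh (sym_diff S T) x)"
      by (intro sum.cong refl) (simp add: walsh_mult finite_of_mem_Pow_lessThan)
    finally show ?thesis .
  qed
  have "fourier_deg_le N (d + e) (\<lambda>x. \<Sum>S\<in>?P. \<Sum>T\<in>?P. c S * c' T * walsh (sym_diff S T) x)"
    by (intro fourier_deg_le_sum term_deg) simp_all
  then show ?thesis
    by (rule fourier_deg_le_cong) (simp add: expand)
qed

lemma sum_sq_flip_diff_eq:
  fixes c :: "nat set \<Rightarrow> complex"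
  assumes g: "\<And>x. x \<in> cube N \<Longrightarrow> g x = (\<Sum>S\<in>Pow {..<N}. c S * walsh S x)"
  shows "(\<Sum>i<N. \<Sum>x\<in>cube N. (cmod (g x - g (flip i x)))\<^sup>2)
    = 2 ^ N * (\<Sum>S\<in>Pow {..<N}. 4 * real (card S) * (cmod (c S))\<^sup>2)"
proof -
  let ?P = "Pow {..<N}"
  have diff: "g x - g (flip i x) = (\<Sum>S\<in>?P. (if i \<in> S then 2 * c S else 0) * walsh S x)"
    if "i < N" "x \<in> cube N" for i x
  proof -
    have "g x - g (flip i x) = (\<Sum>S\<in>?P. c S * walsh S x - c S * walsh S (flip i x))"
      using that by (simp add: g flip_in_cube sum_subtractf)
    also have "\<dots> = (\<Sum>S\<in>?P. (if i \<in> S then 2 * c S else 0) * walsh S x)"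
      by (intro sum.cong refl) (auto simp: walsh_flip finite_of_mem_Pow_lessThan)
    finally show ?thesis .
  qed
  have "(\<Sum>i<N. \<Sum>x\<in>cube N. (cmod (g x - g (flip i x)))\<^sup>2)
      = (\<Sum>i<N. 2 ^ N * (\<Sum>S\<in>?P. (cmod (if i \<in> S then 2 * c S else 0))\<^sup>2))"
    by (intro sum.cong refl) (simp add: diff parseval)
  also have "\<dots> = (\<Sum>i<N. 2 ^ N * (\<Sum>S\<in>?P. if i \<in> S then 4 * (cmod (c S))\<^sup>2 else 0))"
    by (intro sum.cong refl arg_cong2[where f = "(*)"]) (simp_all add: norm_mult power_mult_distrib)
  also have "\<dots> = 2 ^ N * (\<Sum>S\<in>?P. \<Sum>i<N. if i \<in> S then 4 * (cmod (c S))\<^sup>2 else 0)"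
    by (simp only: sum_distrib_left[symmetric] sum.swap[of _ "{..<N}"])
  also have "\<dots> = 2 ^ N * (\<Sum>S\<in>?P. 4 * real (card S) * (cmod (c S))\<^sup>2)"
  proof -
    have "(\<Sum>i<N. if i \<in> S then 4 * (cmod (c S))\<^sup>2 else 0) = 4 * real (card S) * (cmod (c S))\<^sup>2"
      if "S \<in> ?P" for S
      using that by (simp add: sum.If_cases Int_absorb1)
    then show ?thesis by simp
  qed
  finally show ?thesis .
qed

lemma sum_sq_flip_diff_le_degree:
  assumes "fourier_deg_le N d g"
  shows "(\<Sum>i<N. \<Sum>x\<in>cube N. (cmod (g x - g (flip i x)))\<^sup>2)
    \<le> 4 * real d * (\<Sum>x\<in>cube N. (cmod (g x))\<^sup>2)"
proof -
  obtain c where c0: "\<And>S. d < card S \<Longrightarrow> c S = 0"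
    and g: "\<And>x. x \<in> cube N \<Longrightarrow> g x = (\<Sum>S\<in>Pow {..<N}. c S * walsh S x)"
    using assms fourier_deg_leE by blast
  have "(\<Sum>i<N. \<Sum>x\<in>cube N. (cmod (g x - g (flip i x)))\<^sup>2)
      = 2 ^ N * (\<Sum>S\<in>Pow {..<N}. 4 * real (card S) * (cmod (c S))\<^sup>2)"
    using g by (rule sum_sq_flip_diff_eq)
  also have "\<dots> \<le> 2 ^ N * (\<Sum>S\<in>Pow {..<N}. 4 * real d * (cmod (c S))\<^sup>2)"
  proof (intro mult_left_mono sum_mono)
    show "4 * real (card S) * (cmod (c S))\<^sup>2 \<le> 4 * real d * (cmod (c S))\<^sup>2" for S
      by (cases "card S \<le> d") (simp_all add: c0 mult_right_mono)
  qed simp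
  also have "\<dots> = 4 * real d * (\<Sum>x\<in>cube N. (cmod (g x))\<^sup>2)"
    by (simp add: g parseval sum_distrib_left mult_ac cong: sum.cong)
  finally show ?thesis .
qed

section \<open>Quantum query algorithms\<close>

lemma finite_basis_set [simp]: "finite (basis_set N M)"
proof -
  have "basis_set N M \<subseteq> {..<N} \<times> {..<2} \<times> {..<M} \<times> {..<2}"
    by (auto simp: basis_set_def)
  then show ?thesis by (rule finite_subset) auto
qed

definition state_sq_norm :: "nat \<Rightarrow> nat \<Rightarrow> qstate \<Rightarrow> real" where
  "state_sq_norm N M \<psi> = (\<Sum>b\<in>basis_set N M. (cmod (\<psi> b))\<^sup>2)"

lemma state_sq_norm_query: "state_sq_norm N M (query x \<psi>) = state_sq_norm N M \<psi>"
proof -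
  define h where "h = (\<lambda>(i::nat, a::nat, w::nat, r::nat). (i, if x i then 1 - a else a, w, r))"
  have "query x \<psi> = \<psi> \<circ> h"
    by (auto simp: query_def h_def fun_eq_iff)
  moreover have "(\<Sum>b\<in>basis_set N M. (cmod (\<psi> (h b)))\<^sup>2) = (\<Sum>b\<in>basis_set N M. (cmod (\<psi> b))\<^sup>2)"
    by (rule sum.reindex_bij_witness[of _ h h]) (auto simp: h_def basis_set_def)
  ultimately show ?thesis
    by (simp add: state_sq_norm_def)
qed

lemma state_sq_norm_apply_op:
  assumes "unitary_op N M U"
  shows "state_sq_norm N M (apply_op N M U \<psi>) = state_sq_norm N M \<psi>"
proof -
  let ?B = "basis_set N M"
  have "complex_of_real (state_sq_norm N M (apply_op N M U \<psi>))
     = (\<Sum>b\<in>?B. (\<Sum>c\<in>?B. U b c * \<psi> c) * cnj (\<Sum>d\<in>?B. U b d * \<psi> d))"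
    unfolding state_sq_norm_def apply_op_def of_real_sum complex_norm_square ..
  also have "\<dots> = (\<Sum>b\<in>?B. \<Sum>c\<in>?B. \<Sum>d\<in>?B. \<psi> c * cnj (\<psi> d) * (cnj (U b d) * U b c))"
    unfolding cnj_sum sum_product by (simp add: mult_ac)
  also have "\<dots> = (\<Sum>c\<in>?B. \<Sum>d\<in>?B. \<Sum>b\<in>?B. \<psi> c * cnj (\<psi> d) * (cnj (U b d) * U b c))"
    by (subst sum.swap) (rule sum.cong[OF refl], rule sum.swap)
  also have "\<dots> = (\<Sum>c\<in>?B. \<Sum>d\<in>?B. \<psi> c * cnj (\<psi> d) * (\<Sum>b\<in>?B. cnj (U b d) * U b c))"
    by (simp only: sum_distrib_left)
  also have "\<dots> = (\<Sum>c\<in>?B. \<Sum>d\<in>?B. if d = c then \<psi> c * cnj (\<psi> d) else 0)"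
    using assms unfolding unitary_op_def by (intro sum.cong refl) simp
  also have "\<dots> = (\<Sum>c\<in>?B. \<psi> c * cnj (\<psi> c))"
    by (simp add: sum.delta)
  also have "\<dots> = complex_of_real (state_sq_norm N M \<psi>)"
    unfolding state_sq_norm_def of_real_sum complex_norm_square ..
  finally show ?thesis by (simp only: of_real_eq_iff)
qed

lemma state_sq_norm_run:
  "\<forall>U\<in>set Us. unitary_op N M U \<Longrightarrow> state_sq_norm N M (run N M Us x \<psi>) = state_sq_norm N M \<psi>"
  by (induction N M Us x \<psi> rule: run.induct)
    (simp_all add: state_sq_norm_apply_op state_sq_norm_query)

lemma prob_result_0_add_1:
  assumes "b0 \<in> basis_set N M" "\<forall>U\<in>set Us. unitary_op N M U"
  shows "prob_result N M Us b0 x 0 + prob_result N M Us b0 x 1 = 1"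
proof -
  let ?B = "basis_set N M" and ?r = "\<lambda>b. snd (snd (snd b))"
  have "{b\<in>?B. ?r b = 1} = ?B - {b\<in>?B. ?r b = 0}"
    by (auto simp: basis_set_def)
  then have "prob_result N M Us b0 x 0 + prob_result N M Us b0 x 1
      = state_sq_norm N M (run N M Us x (basis_state b0))"
    unfolding prob_result_def state_sq_norm_def
    by (simp add: sum.subset_diff[of "{b\<in>?B. ?r b = 0}" ?B])
  also have "\<dots> = state_sq_norm N M (basis_state b0)"
    using assms(2) by (rule state_sq_norm_run)
  also have "\<dots> = 1"
  proof -
    have "state_sq_norm N M (basis_state b0) = (\<Sum>b\<in>basis_set N M. if b = b0 then 1 else 0)"
      unfolding state_sq_norm_def by (intro sum.cong) (auto simp: basis_state_def)
    then show ?thesis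
      using assms(1) by simp
  qed
  finally show ?thesis .
qed

lemma fourier_deg_le_bit: "fourier_deg_le N 1 (\<lambda>x. if x i then 1 else 0)"
proof (cases "i < N")
  case True
  have "fourier_deg_le N 1 (\<lambda>x. 1 / 2 + (- 1 / 2) * walsh {i} x)"
    using fourier_deg_le_walsh[of "{i}" N] True
    by (intro fourier_deg_le_add fourier_deg_le_const fourier_deg_le_scale) simp_all
  then show ?thesis
    by (rule fourier_deg_le_cong) (simp add: walsh_singleton)
next
  case False
  then show ?thesis
    by (intro fourier_deg_le_cong[OF fourier_deg_le_const[of N 1 0]]) (auto simp: cube_def)
qed

lemma fourier_deg_le_apply_op:
  assumes "\<forall>c\<in>basis_set N M. fourier_deg_le N d (\<lambda>x. \<phi> x c)"
  shows "fourier_deg_le N d (\<lambda>x. apply_op N M U (\<phi> x) b)"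
  unfolding apply_op_def using assms
  by (intro fourier_deg_le_sum fourier_deg_le_scale) simp_all

text \<open>The query gate is affine in the queried bit, so it raises the degree by one.\<close>

lemma fourier_deg_le_query:
  assumes "\<And>b. fourier_deg_le N d (\<lambda>x. \<psi> x b)"
  shows "fourier_deg_le N (d + 1) (\<lambda>x. query x (\<psi> x) b)"
proof -
  obtain i a w r where b: "b = (i, a, w, r)" by (cases b)
  let ?bit = "\<lambda>x. if x i then 1 else 0 :: complex"
  have "fourier_deg_le N (1 + d)
      (\<lambda>x. (1 + (- 1) * ?bit x) * \<psi> x (i, a, w, r) + ?bit x * \<psi> x (i, 1 - a, w, r))"
    by (intro fourier_deg_le_add fourier_deg_le_mult fourier_deg_le_const fourier_deg_le_scale
        fourier_deg_le_bit assms)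
  then show ?thesis
    by (rule fourier_deg_le_cong[OF fourier_deg_le_mono]) (auto simp: query_def b)
qed

text \<open>The list \<open>Us\<close> describes an algorithm with \<open>length Us - 1\<close> queries.\<close>

lemma fourier_deg_le_run:
  assumes "\<forall>c\<in>basis_set N M. fourier_deg_le N d (\<lambda>x. \<phi> x c)" "b \<in> basis_set N M"
  shows "fourier_deg_le N (d + (length Us - 1)) (\<lambda>x. run N M Us x (\<phi> x) b)"
  using assms
proof (induction Us arbitrary: d \<phi> rule: induct_list012)
  case (3 U V Us)
  have "fourier_deg_le N d (\<lambda>x. apply_op N M U (\<phi> x) b)" for b
    using "3.prems"(1) by (rule fourier_deg_le_apply_op)
  then have "fourier_deg_le N (d + 1) (\<lambda>x. query x (apply_op N M U (\<phi> x)) c)" for c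
    by (rule fourier_deg_le_query)
  then show ?case
    using "3.IH"(2)[of "d + 1"] "3.prems"(2) by simp
qed (simp_all add: fourier_deg_le_apply_op)

lemma fourier_deg_le_prob_result:
  "fourier_deg_le N (2 * (length Us - 1)) (\<lambda>x. complex_of_real (prob_result N M Us b0 x v))"
proof -
  let ?\<psi> = "\<lambda>x. run N M Us x (basis_state b0)"
  have amplitude: "fourier_deg_le N (length Us - 1) (\<lambda>x. ?\<psi> x b)" if "b \<in> basis_set N M" for b
    using fourier_deg_le_run[of N M 0 "\<lambda>x. basis_state b0", OF _ that] fourier_deg_le_const
    by simp
  have "fourier_deg_le N (length Us - 1 + (length Us - 1))
      (\<lambda>x. \<Sum>b\<in>{b\<in>basis_set N M. snd (snd (snd b)) = v}. ?\<psi> x b * cnj (?\<psi> x b))"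
    by (intro fourier_deg_le_sum fourier_deg_le_mult fourier_deg_le_cnj amplitude) auto
  then show ?thesis
    unfolding prob_result_def of_real_sum complex_norm_square by (simp add: mult_2)
qed

section \<open>Influence and the query lower bound\<close>

definition result_bias :: "nat \<Rightarrow> nat \<Rightarrow> qop list \<Rightarrow> basis \<Rightarrow> (nat \<Rightarrow> bool) \<Rightarrow> real" where
  "result_bias N M Us b0 x = prob_result N M Us b0 x 0 - prob_result N M Us b0 x 1"

lemma prob_result_nonneg: "0 \<le> prob_result N M Us b0 x v"
  by (simp add: prob_result_def sum_nonneg)

lemma abs_result_bias_le_1:
  assumes "b0 \<in> basis_set N M" "\<forall>U\<in>set Us. unitary_op N M U"
  shows "\<bar>result_bias N M Us b0 x\<bar> \<le> 1"
  using prob_result_0_add_1[OF assms, of x]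
    prob_result_nonneg[of N M Us b0 x 0] prob_result_nonneg[of N M Us b0 x 1]
  by (simp add: result_bias_def abs_le_iff)

lemma result_bias_gap:
  assumes "b0 \<in> basis_set N M" "\<forall>U\<in>set Us. unitary_op N M U"
    and "computes_with_error N M Us b0 f \<epsilon>" "\<forall>x\<in>cube N. f x \<in> {-1, 1}"
    and "x \<in> cube N" "y \<in> cube N" "f x \<noteq> f y"
  shows "2 - 4 * \<epsilon> \<le> \<bar>result_bias N M Us b0 x - result_bias N M Us b0 y\<bar>"
proof -
  have gap: "2 - 4 * \<epsilon> \<le> result_bias N M Us b0 u - result_bias N M Us b0 v"
    if "u \<in> cube N" "v \<in> cube N" "f u = 1" "f v \<noteq> 1" for u v
  proof -
    have "1 - \<epsilon> \<le> prob_result N M Us b0 u 0" "1 - \<epsilon> \<le> prob_result N M Us b0 v 1"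
      using assms(3) that by (auto simp: computes_with_error_def)
    then show ?thesis
      using prob_result_0_add_1[OF assms(1,2), of u] prob_result_0_add_1[OF assms(1,2), of v]
      by (simp add: result_bias_def)
  qed
  show ?thesis
  proof (cases "f x = 1")
    case True
    then show ?thesis using gap[of x y] assms(5-7) by simp
  next
    case False
    moreover have "f x \<in> {-1, 1}" "f y \<in> {-1, 1}" using assms(4-6) by auto
    ultimately have "f y = 1" using assms(7) by auto
    then show ?thesis using gap[of y x] False assms(5,6) by simp
  qed
qed

lemma sum_sq_flip_diff_result_bias_le:
  assumes "b0 \<in> basis_set N M" "\<forall>U\<in>set Us. unitary_op N M U" "length Us = T + 1"
  shows "(\<Sum>i<N. \<Sum>x\<in>cube N. (result_bias N M Us b0 x - result_bias N M Us b0 (flip i x))\<^sup>2)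
    \<le> 8 * real T * 2 ^ N"
proof -
  let ?r = "result_bias N M Us b0"
  define g where "g x = complex_of_real (?r x)" for x
  have prob_deg: "fourier_deg_le N (2 * T) (\<lambda>x. complex_of_real (prob_result N M Us b0 x v))" for v
    using fourier_deg_le_prob_result[of N Us M b0 v] assms(3) by simp
  have "fourier_deg_le N (2 * T) g"
    unfolding g_def result_bias_def of_real_diff by (rule fourier_deg_le_diff[OF prob_deg prob_deg])
  then have "(\<Sum>i<N. \<Sum>x\<in>cube N. (cmod (g x - g (flip i x)))\<^sup>2)
      \<le> 4 * real (2 * T) * (\<Sum>x\<in>cube N. (cmod (g x))\<^sup>2)"
    by (rule sum_sq_flip_diff_le_degree)
  also have "\<dots> \<le> 4 * real (2 * T) * (\<Sum>x\<in>cube N. 1)"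
    using abs_result_bias_le_1[OF assms(1,2)]
    by (intro mult_left_mono sum_mono) (simp_all add: g_def abs_square_le_1)
  finally show ?thesis
    by (simp add: g_def card_cube flip: of_real_diff)
qed

lemma sum_influence_le_sum_sq_flip_diff:
  fixes h :: "(nat \<Rightarrow> bool) \<Rightarrow> real"
  assumes "0 \<le> \<delta>"
    and "\<And>i x. i < N \<Longrightarrow> x \<in> cube N \<Longrightarrow> f x \<noteq> f (flip i x) \<Longrightarrow> \<delta> \<le> \<bar>h x - h (flip i x)\<bar>"
  shows "\<delta>\<^sup>2 * 2 ^ N * (\<Sum>i<N. influence N f i) \<le> (\<Sum>i<N. \<Sum>x\<in>cube N. (h x - h (flip i x))\<^sup>2)"
proof -
  have "\<delta>\<^sup>2 * card {x\<in>cube N. f x \<noteq> f (flip i x)} \<le> (\<Sum>x\<in>cube N. (h x - h (flip i x))\<^sup>2)"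
    if "i < N" for i
  proof -
    have "\<delta>\<^sup>2 * card {x\<in>cube N. f x \<noteq> f (flip i x)} = (\<Sum>x\<in>{x\<in>cube N. f x \<noteq> f (flip i x)}. \<delta>\<^sup>2)"
      by simp
    also have "\<dots> \<le> (\<Sum>x\<in>{x\<in>cube N. f x \<noteq> f (flip i x)}. (h x - h (flip i x))\<^sup>2)"
    proof (rule sum_mono)
      fix x assume "x \<in> {x\<in>cube N. f x \<noteq> f (flip i x)}"
      then have "\<delta> \<le> \<bar>h x - h (flip i x)\<bar>" using assms(2) that by blast
      then show "\<delta>\<^sup>2 \<le> (h x - h (flip i x))\<^sup>2"
        using assms(1) by (metis power2_abs power_mono)
    qed
    also have "\<dots> \<le> (\<Sum>x\<in>cube N. (h x - h (flip i x))\<^sup>2)"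
      by (intro sum_mono2) auto
    finally show ?thesis .
  qed
  then have "(\<Sum>i<N. \<delta>\<^sup>2 * card {x\<in>cube N. f x \<noteq> f (flip i x)})
      \<le> (\<Sum>i<N. \<Sum>x\<in>cube N. (h x - h (flip i x))\<^sup>2)"
    by (intro sum_mono) simp
  then show ?thesis
    by (simp add: influence_def sum_distrib_left)
qed

lemma sum_influence_le_queries:
  assumes "\<forall>x\<in>cube N. f x \<in> {-1, 1}" "\<epsilon> \<le> 1/2"
    and "b0 \<in> basis_set N M" "\<forall>U\<in>set Us. unitary_op N M U" "length Us = T + 1"
    and "computes_with_error N M Us b0 f \<epsilon>"
  shows "(1 - 2 * \<epsilon>)\<^sup>2 * (\<Sum>i<N. influence N f i) \<le> 2 * real T"
proof -
  have "(2 - 4 * \<epsilon>)\<^sup>2 * 2 ^ N * (\<Sum>i<N. influence N f i)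
      \<le> (\<Sum>i<N. \<Sum>x\<in>cube N. (result_bias N M Us b0 x - result_bias N M Us b0 (flip i x))\<^sup>2)"
    using assms(2) result_bias_gap[OF assms(3,4,6,1)] flip_in_cube
    by (intro sum_influence_le_sum_sq_flip_diff) auto
  also have "\<dots> \<le> 8 * real T * 2 ^ N"
    using assms(3-5) by (rule sum_sq_flip_diff_result_bias_le)
  finally have "(4 * ((1 - 2 * \<epsilon>)\<^sup>2 * (\<Sum>i<N. influence N f i))) * 2 ^ N
      \<le> (4 * (2 * real T)) * 2 ^ N"
    by (simp add: power2_eq_square algebra_simps)
  then show ?thesis
    by (simp add: ac_simps)
qed

lemma sum_card_filter_swap:
  assumes "finite A" "finite B"
  shows "(\<Sum>a\<in>A. card {b\<in>B. P a b}) = (\<Sum>b\<in>B. card {a\<in>A. P a b})"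
proof -
  have "(\<Sum>a\<in>A. card {b\<in>B. P a b}) = (\<Sum>a\<in>A. \<Sum>b\<in>B. if P a b then 1 else 0)"
    using assms by (simp add: sum.inter_filter[symmetric])
  also have "\<dots> = (\<Sum>b\<in>B. \<Sum>a\<in>A. if P a b then 1 else 0)"
    by (rule sum.swap)
  also have "\<dots> = (\<Sum>b\<in>B. card {a\<in>A. P a b})"
    using assms by (simp add: sum.inter_filter[symmetric])
  finally show ?thesis .
qed

lemma avg_sensitivity_eq_sum_influence: "avg_sensitivity N f = (\<Sum>i<N. influence N f i)"
proof -
  have "(\<Sum>x\<in>cube N. sensitivity N f x) = (\<Sum>i<N. card {x\<in>cube N. f x \<noteq> f (flip i x)})"
    unfolding sensitivity_def lessThan_def[symmetric]
    using sum_card_filter_swap[of "cube N" "{..<N}" "\<lambda>x i. f x \<noteq> f (flip i x)"]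
    by (simp add: lessThan_def)
  then have "(\<Sum>x\<in>cube N. real (sensitivity N f x))
      = (\<Sum>i<N. real (card {x\<in>cube N. f x \<noteq> f (flip i x)}))"
    by (simp only: of_nat_sum[symmetric])
  then show ?thesis
    unfolding avg_sensitivity_def influence_def by (simp only: sum_divide_distrib[symmetric])
qed

lemma one_minus_two_sqrt_le_sq:
  fixes e :: real
  assumes "0 \<le> e" "e \<le> 1/4"
  shows "1 - 2 * sqrt e \<le> (1 - 2 * e)\<^sup>2"
proof -
  have "sqrt e \<le> 1/2"
    using real_sqrt_le_mono[OF assms(2)] by (simp add: real_sqrt_divide)
  then have "2 * sqrt e * (2 * sqrt e) \<le> 2 * sqrt e * 1"
    using assms(1) by (intro mult_left_mono) simp_all
  then have "4 * e \<le> 2 * sqrt e"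
    using assms(1) by simp
  then have "1 - 2 * sqrt e \<le> 1 - 4 * e + (2 * e)\<^sup>2"
    using zero_le_power2[of "2 * e"] by linarith
  also have "\<dots> = (1 - 2 * e)\<^sup>2"
    by (simp add: power2_eq_square algebra_simps)
  finally show ?thesis .
qed

theorem theorem3:
  fixes N M T :: nat and f :: "(nat \<Rightarrow> bool) \<Rightarrow> int" and Us :: "qop list"
    and b0 :: basis and \<epsilon> :: real
  assumes "N \<ge> 1"
    and "\<forall>x\<in>cube N. f x \<in> {-1, 1}"
    and "0 \<le> \<epsilon>"
    and "b0 \<in> basis_set N M"
    and "\<forall>U\<in>set Us. unitary_op N M U"
    and "length Us = T + 1"
    and "computes_with_error N M Us b0 f \<epsilon>"
  shows "real T \<ge> (1 - 2 * sqrt \<epsilon>) / 2 * avg_influence N f * real N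
    \<and> (1 - 2 * sqrt \<epsilon>) / 2 * avg_influence N f * real N
        = (1 - 2 * sqrt \<epsilon>) / 2 * avg_sensitivity N f"
proof -
  define I where "I = (\<Sum>i<N. influence N f i)"
  have I_nonneg: "0 \<le> I"
    by (simp add: I_def influence_def sum_nonneg)
  have avg_influence: "avg_influence N f * real N = I"
    using assms(1) by (simp add: avg_influence_def I_def)
  have "(1 - 2 * sqrt \<epsilon>) / 2 * I \<le> real T"
  proof (cases "\<epsilon> \<le> 1/4")
    case True
    have "(1 - 2 * sqrt \<epsilon>) * I \<le> (1 - 2 * \<epsilon>)\<^sup>2 * I"
      using one_minus_two_sqrt_le_sq[OF assms(3) True] I_nonneg by (rule mult_right_mono)
    also have "\<dots> \<le> 2 * real T"
      unfolding I_def using True assms(2,4-7) by (intro sum_influence_le_queries) auto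
    finally show ?thesis by simp
  next
    case False
    then have "1 < 2 * sqrt \<epsilon>"
      using real_sqrt_less_mono[of "1/4" \<epsilon>] by (simp add: real_sqrt_divide)
    then have "(1 - 2 * sqrt \<epsilon>) / 2 * I \<le> 0"
      using I_nonneg by (intro mult_nonpos_nonneg) auto
    then show ?thesis by simp
  qed
  then show ?thesis
    using avg_influence by (simp add: avg_sensitivity_eq_sum_influence I_def mult.assoc)
qed

end
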